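(* Let $G$ be a just infinite group that is not virtually abelian, let $Y$ be a finite set, let $H\le G^Y$ be an infra-direct product, and let $U\subseteq Y$ be minimal such that the restriction of $\psi_U$ to $H$, $H\to G^U$, is injective. Then for every finite index subgroup $L\le H$, $U$ is also minimal such that the restriction of $\psi_U$ to $L$, $L\to G^U$, is injective.
   Context: $G^Y$ is the direct product of copies of $G$ indexed by $Y$; for $y\in Y$, $\psi_y$ is the projection onto the $y$-th coordinate and for $U\subseteq Y$, $\psi_U=(\psi_u)_{u\in U}:G^Y\to G^U$. $H\le G^Y$ is an infra-direct product if $\psi_y(H)$ has finite index in $G$ for every $y\in Y$. A group is just infinite if it is infinite and every proper quotient is finite. *)

theory Defs
  imports "HOL-Algebra.Product_Groups"
begin

definition just_infinite :: "('a, 'b) monoid_scheme \<Rightarrow> bool" where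
  "just_infinite G \<longleftrightarrow> infinite (carrier G) \<and>
     (\<forall>N. N \<lhd> G \<longrightarrow> N \<noteq> {\<one>\<^bsub>G\<^esub>} \<longrightarrow> finite (carrier (G Mod N)))"

definition virtually_abelian :: "('a, 'b) monoid_scheme \<Rightarrow> bool" where
  "virtually_abelian G \<longleftrightarrow> (\<exists>A. subgroup A G \<and> finite (rcosets\<^bsub>G\<^esub> A) \<and>
      comm_group (G\<lparr>carrier := A\<rparr>))"

text \<open>The direct power G^Y, elements are extensional functions Y \<rightarrow> carrier G.\<close>
abbreviation power_group :: "('a, 'b) monoid_scheme \<Rightarrow> 'c set \<Rightarrow> ('c \<Rightarrow> 'a) monoid" where
  "power_group G Y \<equiv> product_group Y (\<lambda>_. G)"

definition psi :: "'c set \<Rightarrow> ('c \<Rightarrow> 'a) \<Rightarrow> ('c \<Rightarrow> 'a)" where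
  "psi U f = restrict f U"

definition infra_direct :: "('a, 'b) monoid_scheme \<Rightarrow> 'c set \<Rightarrow> ('c \<Rightarrow> 'a) set \<Rightarrow> bool" where
  "infra_direct G Y H \<longleftrightarrow> subgroup H (power_group G Y) \<and>
     (\<forall>y\<in>Y. finite (rcosets\<^bsub>G\<^esub> ((\<lambda>h. h y) ` H)))"

definition minimal_injective :: "'c set \<Rightarrow> ('c \<Rightarrow> 'a) set \<Rightarrow> 'c set \<Rightarrow> bool" where
  "minimal_injective Y H U \<longleftrightarrow> U \<subseteq> Y \<and> inj_on (psi U) H \<and>
     (\<forall>V. V \<subset> U \<longrightarrow> \<not> inj_on (psi V) H)"

end

theory Submission
  imports Defs "HOL-Algebra.Group_Action"
begin

text \<open>
  If \<open>\<psi>\<^sub>V\<close> is injective on \<open>L\<close>, its kernel on \<open>H\<close> is a normal subgroup of \<open>H\<close> meeting the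
  finite-index subgroup \<open>L\<close> trivially, hence finite. Conjugating by \<open>H\<close>, each coordinate of an
  element of this kernel has only finitely many conjugates under the finite-index subgroup
  \<open>\<psi>\<^sub>y(H)\<close> of \<open>G\<close>, hence only finitely many conjugates in \<open>G\<close>. But a just infinite group with a
  nontrivial element \<open>x\<close> of finite conjugacy class is virtually abelian: the centralizer \<open>M\<close> of the
  class of \<open>x\<close> is normal of finite index, the centralizer \<open>Z\<close> of \<open>M\<close> is normal and contains \<open>x\<close>,
  so it has finite index too, and \<open>Z \<inter> M\<close> is abelian. So the kernel is trivial and
  \<open>\<psi>\<^sub>V\<close> is injective on \<open>H\<close>, which the minimality of \<open>U\<close> forbids for \<open>V \<subset> U\<close>.
\<close>

definition centralizer :: "('a, 'b) monoid_scheme \<Rightarrow> 'a set \<Rightarrow> 'a set" where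
  "centralizer G S = {g \<in> carrier G. \<forall>x\<in>S. g \<otimes>\<^bsub>G\<^esub> x = x \<otimes>\<^bsub>G\<^esub> g}"

definition conjugates :: "('a, 'b) monoid_scheme \<Rightarrow> 'a set \<Rightarrow> 'a \<Rightarrow> 'a set" where
  "conjugates G A x = {g \<otimes>\<^bsub>G\<^esub> x \<otimes>\<^bsub>G\<^esub> inv\<^bsub>G\<^esub> g | g. g \<in> A}"

context group
begin

lemma subgroup_centralizer:
  assumes "S \<subseteq> carrier G"
  shows "subgroup (centralizer G S) G"
proof (rule subgroupI)
  show "centralizer G S \<subseteq> carrier G" by (auto simp: centralizer_def)
  have "\<one> \<in> centralizer G S" using assms by (auto simp: centralizer_def)
  then show "centralizer G S \<noteq> {}" by blast
next
  fix a b assume a: "a \<in> centralizer G S" and b: "b \<in> centralizer G S"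
  then have [simp]: "a \<in> carrier G" "b \<in> carrier G" by (auto simp: centralizer_def)
  have "inv a \<otimes> x = x \<otimes> inv a" if x: "x \<in> S" for x
  proof -
    have [simp]: "x \<in> carrier G" using x assms by blast
    have "inv a \<otimes> x = inv a \<otimes> (x \<otimes> a) \<otimes> inv a" by (simp add: m_assoc)
    also have "\<dots> = inv a \<otimes> (a \<otimes> x) \<otimes> inv a" using a x by (simp add: centralizer_def)
    also have "\<dots> = x \<otimes> inv a" by (simp add: m_assoc [symmetric])
    finally show ?thesis .
  qed
  then show "inv a \<in> centralizer G S" by (simp add: centralizer_def)
  have "a \<otimes> b \<otimes> x = x \<otimes> (a \<otimes> b)" if x: "x \<in> S" for x
  proof -
    have [simp]: "x \<in> carrier G" using x assms by blast
    have "a \<otimes> b \<otimes> x = a \<otimes> (x \<otimes> b)" using b x by (simp add: centralizer_def m_assoc)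
    also have "\<dots> = x \<otimes> (a \<otimes> b)" using a x by (simp add: centralizer_def m_assoc [symmetric])
    finally show ?thesis .
  qed
  then show "a \<otimes> b \<in> centralizer G S" by (simp add: centralizer_def)
qed

lemma centralizer_empty [simp]: "centralizer G {} = carrier G"
  by (simp add: centralizer_def)

lemma centralizer_insert:
  "centralizer G (insert x S) = centralizer G {x} \<inter> centralizer G S"
  by (auto simp: centralizer_def)

lemma normal_centralizer:
  assumes S: "S \<subseteq> carrier G"
    and conj_closed: "\<And>g x. g \<in> carrier G \<Longrightarrow> x \<in> S \<Longrightarrow> g \<otimes> x \<otimes> inv g \<in> S"
  shows "centralizer G S \<lhd> G"
  unfolding normal_inv_iff
proof (intro conjI ballI subgroup_centralizer [OF S])
  fix g c assume g [simp]: "g \<in> carrier G" and c: "c \<in> centralizer G S"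
  then have [simp]: "c \<in> carrier G" by (simp add: centralizer_def)
  have "g \<otimes> c \<otimes> inv g \<otimes> x = x \<otimes> (g \<otimes> c \<otimes> inv g)" if x: "x \<in> S" for x
  proof -
    have [simp]: "x \<in> carrier G" using x S by blast
    have "inv g \<otimes> x \<otimes> g \<in> S" using conj_closed [of "inv g" x] x by simp
    then have comm: "c \<otimes> (inv g \<otimes> x \<otimes> g) = inv g \<otimes> x \<otimes> g \<otimes> c"
      using c by (simp add: centralizer_def)
    have "g \<otimes> c \<otimes> inv g \<otimes> x = g \<otimes> (c \<otimes> (inv g \<otimes> x \<otimes> g)) \<otimes> inv g"
      by (simp add: m_assoc)
    also have "\<dots> = x \<otimes> (g \<otimes> c \<otimes> inv g)"
      by (simp add: comm m_assoc [symmetric])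
    finally show ?thesis .
  qed
  then show "g \<otimes> c \<otimes> inv g \<in> centralizer G S" by (simp add: centralizer_def)
qed

lemma rcos_Int:
  assumes "subgroup A G" "subgroup B G" "a \<in> carrier G"
  shows "(A \<inter> B) #> a = (A #> a) \<inter> (B #> a)"
proof
  show "(A \<inter> B) #> a \<subseteq> (A #> a) \<inter> (B #> a)" unfolding r_coset_def by auto
  show "(A #> a) \<inter> (B #> a) \<subseteq> (A \<inter> B) #> a"
  proof
    fix x assume "x \<in> (A #> a) \<inter> (B #> a)"
    then obtain h1 h2 where h: "h1 \<in> A" "h2 \<in> B" "x = h1 \<otimes> a" "x = h2 \<otimes> a"
      unfolding r_coset_def by auto
    have "h1 = h2" using h assms subgroup.mem_carrier right_cancel by metis
    then show "x \<in> (A \<inter> B) #> a" using h unfolding r_coset_def by auto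
  qed
qed

lemma finite_rcosets_Int:
  assumes "subgroup A G" "subgroup B G" "finite (rcosets A)" "finite (rcosets B)"
  shows "finite (rcosets (A \<inter> B))"
proof -
  have "rcosets (A \<inter> B) \<subseteq> (\<lambda>(P, Q). P \<inter> Q) ` Sigma (rcosets A) (\<lambda>_. rcosets B)"
    unfolding RCOSETS_def using rcos_Int [OF assms(1,2)] by fastforce
  then show ?thesis using assms(3,4) by (meson finite_SigmaI finite_imageI finite_subset)
qed

lemma finite_conjugates_iff_finite_rcosets_centralizer:
  assumes x: "x \<in> carrier G"
  shows "finite (conjugates G (carrier G) x) \<longleftrightarrow> finite (rcosets (centralizer G {x}))"
proof -
  let ?conj = "\<lambda>g. \<lambda>h\<in>carrier G. g \<otimes> h \<otimes> inv g"
  have orbit: "orbit G ?conj x = conjugates G (carrier G) x"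
    using x by (auto simp: orbit_def conjugates_def)
  have stabilizer: "stabilizer G ?conj x = centralizer G {x}"
  proof -
    have "g \<otimes> x \<otimes> inv g = x \<longleftrightarrow> g \<otimes> x = x \<otimes> g" if "g \<in> carrier G" for g
      using that x by (metis inv_solve_right m_closed)
    then show ?thesis using x by (auto simp: stabilizer_def centralizer_def)
  qed
  show ?thesis
    using bij_betw_finite [OF group_action.orbit_stab_fun_is_bij [OF action_by_conjugation x]]
    unfolding orbit stabilizer by simp
qed

lemma finite_rcosets_centralizer:
  assumes "finite S" "S \<subseteq> carrier G" "\<And>x. x \<in> S \<Longrightarrow> finite (conjugates G (carrier G) x)"
  shows "finite (rcosets (centralizer G S))"
  using assms
proof (induction S rule: finite_induct)
  case empty
  then show ?case by (simp add: RCOSETS_def subgroup.rcos_const [OF subgroup_self is_group])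
next
  case (insert x S)
  then have x: "x \<in> carrier G" and "finite (conjugates G (carrier G) x)" by simp_all
  then have "finite (rcosets (centralizer G {x}))"
    by (simp only: finite_conjugates_iff_finite_rcosets_centralizer [OF x, symmetric])
  moreover have "S \<subseteq> carrier G" "finite (rcosets (centralizer G S))" using insert by simp_all
  ultimately show ?case
    unfolding centralizer_insert [of x S] using x
    by (intro finite_rcosets_Int subgroup_centralizer) auto
qed

lemma conjugates_subset_carrier:
  "x \<in> carrier G \<Longrightarrow> conjugates G (carrier G) x \<subseteq> carrier G"
  by (auto simp: conjugates_def)

lemma conjugate_mem_conjugates:
  assumes "g \<in> carrier G" "x \<in> carrier G" "y \<in> conjugates G (carrier G) x"
  shows "g \<otimes> y \<otimes> inv g \<in> conjugates G (carrier G) x"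
proof -
  obtain h where h: "h \<in> carrier G" "y = h \<otimes> x \<otimes> inv h"
    using assms(3) by (auto simp: conjugates_def)
  then have "g \<otimes> y \<otimes> inv g = (g \<otimes> h) \<otimes> x \<otimes> inv (g \<otimes> h)"
    using assms(1,2) by (simp add: inv_mult_group m_assoc)
  then show ?thesis
    using h assms(1) unfolding conjugates_def by blast
qed

lemma finite_rcosets_imp_finite_transversal:
  assumes A: "subgroup A G" and fin: "finite (rcosets A)"
  obtains T where "finite T" "T \<subseteq> carrier G" "\<And>g. g \<in> carrier G \<Longrightarrow> \<exists>t\<in>T. g \<in> A #> t"
proof
  define rep where "rep R = (SOME t. t \<in> R)" for R :: "'a set"
  have rep: "rep (A #> g) \<in> A #> g" if "g \<in> carrier G" for g
    unfolding rep_def using rcos_self [OF that A] by (rule someI)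
  show "finite (rep ` (rcosets A))" using fin by blast
  show "rep ` (rcosets A) \<subseteq> carrier G"
    using rep A by (auto simp: RCOSETS_def intro: subgroup.elemrcos_carrier [OF A is_group])
  fix g assume g: "g \<in> carrier G"
  have "A #> g = A #> rep (A #> g)" using repr_independence [OF rep [OF g] g A] .
  then have "g \<in> A #> rep (A #> g)" using rcos_self [OF g A] by simp
  moreover have "A #> g \<in> rcosets A" using g by (auto simp: RCOSETS_def)
  ultimately show "\<exists>t\<in>rep ` (rcosets A). g \<in> A #> t" by blast
qed

lemma finite_conjugates_if_finite_index:
  assumes A: "subgroup A G" "finite (rcosets A)"
    and x: "x \<in> carrier G" and fin: "finite (conjugates G A x)"
  shows "finite (conjugates G (carrier G) x)"
proof -
  obtain T where T: "finite T" "T \<subseteq> carrier G" "\<And>g. g \<in> carrier G \<Longrightarrow> \<exists>t\<in>T. g \<in> A #> t"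
    using finite_rcosets_imp_finite_transversal [OF A] by blast
  have "conjugates G (carrier G) x \<subseteq> (\<lambda>(y, t). inv t \<otimes> y \<otimes> t) ` (conjugates G A x \<times> T)"
  proof
    fix z assume "z \<in> conjugates G (carrier G) x"
    then obtain g where g: "g \<in> carrier G" "z = g \<otimes> x \<otimes> inv g"
      by (auto simp: conjugates_def)
    \<comment> \<open>writing \<open>inv g = a \<otimes> t\<close> gives \<open>z = inv t \<otimes> (inv a \<otimes> x \<otimes> a) \<otimes> t\<close>\<close>
    obtain t a where t: "t \<in> T" "a \<in> A" "inv g = a \<otimes> t"
      using T(3) [of "inv g"] g(1) by (auto simp: r_coset_def)
    have [simp]: "t \<in> carrier G" "a \<in> carrier G"
      using t T(2) subgroup.mem_carrier [OF A(1)] by auto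
    have "g = inv (inv g)" using g(1) by simp
    also have "\<dots> = inv t \<otimes> inv a" using t(3) by (simp add: inv_mult_group)
    finally have "z = inv t \<otimes> (inv a \<otimes> x \<otimes> inv (inv a)) \<otimes> t"
      using g(2) x by (simp add: inv_mult_group m_assoc)
    moreover have "inv a \<otimes> x \<otimes> inv (inv a) \<in> conjugates G A x"
      using subgroup.m_inv_closed [OF A(1) t(2)] unfolding conjugates_def by blast
    ultimately show "z \<in> (\<lambda>(y, t). inv t \<otimes> y \<otimes> t) ` (conjugates G A x \<times> T)"
      using t(1) by force
  qed
  then show ?thesis
    by (rule finite_subset) (intro finite_imageI finite_cartesian_product fin T(1))
qed

lemma centralizer_conjugates:
  assumes x: "x \<in> carrier G" and fin: "finite (conjugates G (carrier G) x)"
  shows "centralizer G (conjugates G (carrier G) x) \<lhd> G"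
    and "finite (rcosets (centralizer G (conjugates G (carrier G) x)))"
proof -
  define C where "C = conjugates G (carrier G) x"
  have C_carrier: "C \<subseteq> carrier G"
    unfolding C_def using conjugates_subset_carrier [OF x] .
  have C_conj: "g \<otimes> y \<otimes> inv g \<in> C" if "g \<in> carrier G" "y \<in> C" for g y
    using conjugate_mem_conjugates that x by (simp add: C_def)
  show "centralizer G C \<lhd> G" by (rule normal_centralizer [OF C_carrier C_conj])
  show "finite (rcosets (centralizer G C))"
  proof (rule finite_rcosets_centralizer [OF _ C_carrier])
    show "finite C" using fin by (simp add: C_def)
    show "finite (conjugates G (carrier G) y)" if "y \<in> C" for y
    proof (rule finite_subset)
      show "conjugates G (carrier G) y \<subseteq> C" using C_conj that by (auto simp: conjugates_def)
    qed fact
  qed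
qed

lemma virtually_abelian_if_finite_conjugates:
  assumes ji: "just_infinite G" and x: "x \<in> carrier G" "x \<noteq> \<one>"
    and fin: "finite (conjugates G (carrier G) x)"
  shows "virtually_abelian G"
proof -
  define M where "M = centralizer G (conjugates G (carrier G) x)"
  have M_normal: "M \<lhd> G" and M_index: "finite (rcosets M)"
    unfolding M_def using centralizer_conjugates [OF x(1) fin] by blast+
  define Z where "Z = centralizer G M"
  have M_carrier: "M \<subseteq> carrier G" by (simp add: M_def centralizer_def)
  have Z_normal: "Z \<lhd> G"
    unfolding Z_def by (rule normal_centralizer [OF M_carrier normal.inv_op_closed2 [OF M_normal]])
  have "x \<in> conjugates G (carrier G) x"
    unfolding conjugates_def using x(1) by (auto intro!: exI [of _ \<one>])
  then have "x \<in> Z" using x(1) by (auto simp: Z_def M_def centralizer_def)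
  then have "Z \<noteq> {\<one>}" using x(2) by blast
  then have "finite (carrier (G Mod Z))" using ji Z_normal unfolding just_infinite_def by blast
  then have Z_index: "finite (rcosets Z)" by (simp add: FactGroup_def)
  have Z: "subgroup Z G" and M: "subgroup M G"
    using normal_imp_subgroup Z_normal M_normal by blast+
  then have ZM: "subgroup (Z \<inter> M) G" by (rule subgroups_Inter_pair)
  moreover have "finite (rcosets (Z \<inter> M))" using finite_rcosets_Int [OF Z M Z_index M_index] .
  moreover have "comm_group (G\<lparr>carrier := Z \<inter> M\<rparr>)"
  proof (rule group.group_comm_groupI [OF subgroup_imp_group [OF ZM]])
    fix a b assume "a \<in> carrier (G\<lparr>carrier := Z \<inter> M\<rparr>)" "b \<in> carrier (G\<lparr>carrier := Z \<inter> M\<rparr>)"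
    then have "a \<in> Z" "b \<in> M" by simp_all
    then show "a \<otimes>\<^bsub>G\<lparr>carrier := Z \<inter> M\<rparr>\<^esub> b = b \<otimes>\<^bsub>G\<lparr>carrier := Z \<inter> M\<rparr>\<^esub> a"
      by (simp add: Z_def centralizer_def)
  qed
  ultimately show ?thesis unfolding virtually_abelian_def by blast
qed

lemma finite_if_trivial_Int_finite_index:
  assumes L: "subgroup L G" and N: "subgroup N G"
    and triv: "N \<inter> L \<subseteq> {\<one>}" and fin: "finite (rcosets L)"
  shows "finite N"
proof -
  have "inj_on (\<lambda>n. L #> n) N"
  proof (rule inj_onI)
    fix n1 n2 assume n: "n1 \<in> N" "n2 \<in> N" "L #> n1 = L #> n2"
    then have [simp]: "n1 \<in> carrier G" "n2 \<in> carrier G" using subgroup.mem_carrier [OF N] by auto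
    have "n1 \<otimes> inv n2 \<in> L"
      using n(3) rcos_self [OF _ L, of n1] by (auto intro: subgroup.rcos_module_imp [OF L is_group])
    moreover have "n1 \<otimes> inv n2 \<in> N" using n N by (simp add: subgroup.m_closed subgroup.m_inv_closed)
    ultimately have "n1 \<otimes> inv n2 = \<one>" using triv by blast
    have "n1 = n1 \<otimes> inv n2 \<otimes> n2" by (simp add: m_assoc)
    also have "\<dots> = n2" using \<open>n1 \<otimes> inv n2 = \<one>\<close> by simp
    finally show "n1 = n2" .
  qed
  moreover have "(\<lambda>n. L #> n) ` N \<subseteq> rcosets L"
    using subgroup.mem_carrier [OF N] by (auto simp: RCOSETS_def)
  ultimately show ?thesis using fin by (meson finite_imageD finite_subset)
qed

end

lemma group_hom_subgroup:
  assumes "group_hom G H h" "subgroup I G"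
  shows "group_hom (G\<lparr>carrier := I\<rparr>) H h"
proof -
  interpret group_hom G H h by fact
  have "h \<in> hom (G\<lparr>carrier := I\<rparr>) H"
    using subgroup.mem_carrier [OF assms(2)] by (auto simp: hom_def)
  then show ?thesis
    using G.subgroup_imp_group [OF assms(2)] H.group_axioms
    by (simp add: group_hom_def group_hom_axioms_def)
qed

lemma hom_psi:
  assumes "V \<subseteq> Y"
  shows "psi V \<in> hom (power_group G Y) (power_group G V)"
proof -
  have "Y \<inter> V = V" using assms by blast
  then show ?thesis by (auto simp: hom_def psi_def PiE_iff intro!: restrict_ext)
qed

lemma hom_coordinate: "y \<in> Y \<Longrightarrow> (\<lambda>f. f y) \<in> hom (power_group G Y) G"
  by (auto simp: hom_def PiE_iff)

lemma finite_conjugates_coordinate_of_finite_normal: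
  fixes G :: "('a, 'b) monoid_scheme" and Y :: "'c set" and H K :: "('c \<Rightarrow> 'a) set"
  assumes G: "group G" and infra: "infra_direct G Y H"
    and K: "K \<lhd> (power_group G Y)\<lparr>carrier := H\<rparr>" and fin: "finite K"
    and k: "k \<in> K" and u: "u \<in> Y"
  shows "finite (conjugates G (carrier G) (k u))"
proof -
  interpret G: group G by fact
  define P where "P = power_group G Y"
  interpret P: group P unfolding P_def using G by simp
  have H: "subgroup H P" using infra unfolding infra_direct_def P_def by blast
  interpret K: normal K "P\<lparr>carrier := H\<rparr>" using K unfolding P_def .
  have k_H: "k \<in> H" using k K.subset by auto
  interpret coord: group_hom P G "\<lambda>f. f u"
    using hom_coordinate [OF u] G unfolding P_def by (simp add: group_hom_def group_hom_axioms_def)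
  define A where "A = (\<lambda>h. h u) ` H"
  have A: "subgroup A G" unfolding A_def by (rule coord.subgroup_img_is_subgroup [OF H])
  have "conjugates G A (k u) \<subseteq> (\<lambda>f. f u) ` K"
  proof
    fix z assume "z \<in> conjugates G A (k u)"
    then obtain h where h: "h \<in> H" "z = h u \<otimes>\<^bsub>G\<^esub> k u \<otimes>\<^bsub>G\<^esub> inv\<^bsub>G\<^esub> h u"
      by (auto simp: conjugates_def A_def)
    have "h \<otimes>\<^bsub>P\<^esub> k \<otimes>\<^bsub>P\<^esub> inv\<^bsub>P\<^esub> h \<in> K"
      using K.inv_op_closed2 [of h k] h(1) k by (simp add: P.m_inv_consistent [OF H])
    moreover have "(h \<otimes>\<^bsub>P\<^esub> k \<otimes>\<^bsub>P\<^esub> inv\<^bsub>P\<^esub> h) u = z"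
      using h k_H subgroup.mem_carrier [OF H] by auto
    ultimately show "z \<in> (\<lambda>f. f u) ` K" by force
  qed
  then have "finite (conjugates G A (k u))" using fin by (meson finite_imageI finite_subset)
  moreover have "finite (rcosets\<^bsub>G\<^esub> A)" using infra u unfolding infra_direct_def A_def by blast
  moreover have "k u \<in> carrier G" using k_H subgroup.mem_carrier [OF H] by auto
  ultimately show ?thesis using G.finite_conjugates_if_finite_index [OF A] by blast
qed

lemma finite_normal_subgroup_of_infra_direct_trivial:
  fixes G :: "('a, 'b) monoid_scheme" and Y :: "'c set" and H K :: "('c \<Rightarrow> 'a) set"
  assumes G: "group G" and ji: "just_infinite G" and not_va: "\<not> virtually_abelian G"
    and infra: "infra_direct G Y H"
    and K: "K \<lhd> (power_group G Y)\<lparr>carrier := H\<rparr>" and fin: "finite K"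
  shows "K = {\<one>\<^bsub>power_group G Y\<^esub>}"
proof -
  interpret G: group G by fact
  define P where "P = power_group G Y"
  interpret K: normal K "P\<lparr>carrier := H\<rparr>" using K unfolding P_def .
  have H: "subgroup H P" using infra unfolding infra_direct_def P_def by blast
  have trivial: "k = \<one>\<^bsub>P\<^esub>" if k: "k \<in> K" for k
  proof -
    have "k \<in> carrier P" using k K.subset subgroup.mem_carrier [OF H] by auto
    then have k_ext: "k \<in> extensional Y" and k_carrier: "\<And>u. u \<in> Y \<Longrightarrow> k u \<in> carrier G"
      by (auto simp: P_def PiE_def)
    have "k u = \<one>\<^bsub>G\<^esub>" if u: "u \<in> Y" for u
      using G.virtually_abelian_if_finite_conjugates [OF ji k_carrier [OF u]] not_va
        finite_conjugates_coordinate_of_finite_normal [OF G infra K fin k u] by blast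
    then show ?thesis
      unfolding P_def one_product_group using k_ext by (intro extensionalityI) auto
  qed
  have "\<one>\<^bsub>P\<^esub> \<in> K" using subgroup.one_closed [OF K.subgroup_axioms] by simp
  then show ?thesis using trivial unfolding P_def by blast
qed

lemma inj_on_psi_if_inj_on_finite_index:
  fixes G :: "('a, 'b) monoid_scheme" and Y :: "'c set" and H L :: "('c \<Rightarrow> 'a) set"
  assumes G: "group G" "just_infinite G" "\<not> virtually_abelian G"
    and infra: "infra_direct G Y H" and V: "V \<subseteq> Y"
    and L: "subgroup L (power_group G Y)" "L \<subseteq> H"
    and L_index: "finite (rcosets\<^bsub>(power_group G Y)\<lparr>carrier := H\<rparr>\<^esub> L)"
    and inj_L: "inj_on (psi V) L"
  shows "inj_on (psi V) H"
proof -
  define P where "P = power_group G Y"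
  interpret P: group P unfolding P_def using G(1) by simp
  have H: "subgroup H P" using infra unfolding infra_direct_def P_def by blast
  interpret PH: group "P\<lparr>carrier := H\<rparr>" using P.subgroup_imp_group [OF H] .
  have "group_hom P (power_group G V) (psi V)"
    using hom_psi [OF V] G(1) unfolding P_def by (simp add: group_hom_def group_hom_axioms_def)
  then interpret psi_H: group_hom "P\<lparr>carrier := H\<rparr>" "power_group G V" "psi V"
    using group_hom_subgroup H by blast
  define K where "K = kernel (P\<lparr>carrier := H\<rparr>) (power_group G V) (psi V)"
  have "K \<inter> L \<subseteq> {\<one>\<^bsub>P\<^esub>}"
  proof
    fix k assume "k \<in> K \<inter> L"
    then have "k \<in> L" "psi V k = psi V \<one>\<^bsub>P\<^esub>"
      using psi_H.hom_one by (auto simp: K_def kernel_def)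
    moreover have "\<one>\<^bsub>P\<^esub> \<in> L" using subgroup.one_closed [OF L(1)] unfolding P_def .
    ultimately show "k \<in> {\<one>\<^bsub>P\<^esub>}" using inj_L by (auto dest: inj_onD)
  qed
  moreover have "subgroup L (P\<lparr>carrier := H\<rparr>)"
    using P.subgroup_incl [OF L(1) [folded P_def] H L(2)] .
  ultimately have "finite K"
    using PH.finite_if_trivial_Int_finite_index psi_H.subgroup_kernel L_index
    unfolding K_def P_def by simp
  then have "K = {\<one>\<^bsub>P\<^esub>}"
    using finite_normal_subgroup_of_infra_direct_trivial G infra psi_H.normal_kernel
    unfolding K_def P_def by blast
  then show ?thesis
    using psi_H.inj_on_one_iff by (auto simp: K_def kernel_def)
qed

theorem lemma3p2:
  fixes G :: "('a, 'b) monoid_scheme" and Y :: "'c set"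
    and H L :: "('c \<Rightarrow> 'a) set" and U :: "'c set"
  assumes "group G"
    and "just_infinite G"
    and "\<not> virtually_abelian G"
    and "finite Y"
    and "infra_direct G Y H"
    and "minimal_injective Y H U"
    and "subgroup L (power_group G Y)"
    and "L \<subseteq> H"
    and "finite (rcosets\<^bsub>(power_group G Y)\<lparr>carrier := H\<rparr>\<^esub> L)"
  shows "minimal_injective Y L U"
proof -
  have U: "U \<subseteq> Y" "inj_on (psi U) H" "\<And>V. V \<subset> U \<Longrightarrow> \<not> inj_on (psi V) H"
    using assms(6) unfolding minimal_injective_def by auto
  have "\<not> inj_on (psi V) L" if "V \<subset> U" for V
    using inj_on_psi_if_inj_on_finite_index [OF assms(1-3,5) _ assms(7-9)] U(1,3) that by blast
  then show ?thesis
    using U(1) inj_on_subset [OF U(2) assms(8)] unfolding minimal_injective_def by blast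
qed

end
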